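(* Let $K$ be a field of characteristic different from $2$ and $3$, let $L$ be a perfect Lie algebra, $A$ an associative commutative algebra with unit, with at least one of $L$, $A$ finite-dimensional, $D$ a Lie subalgebra of $\operatorname{Der}(A)$, $\langle\cdot,\cdot\rangle$ a nonzero symmetric bilinear invariant form on $L$, and $\xi$ a nonzero element of $HC^1(A)$. Consider the Lie algebra $(L\otimes A)\oplus Kz\oplus D$ with brackets $[x\otimes a,y\otimes b]=[x,y]\otimes ab+\langle x,y\rangle\xi(a,b)z$, $[d,x\otimes a]=x\otimes d(a)$, the bracket of $D$, and $z$ central ($x,y\in L$, $a,b\in A$, $d\in D$), assuming these brackets define a Lie algebra. Then $Z^2_{comm}((L\otimes A)\oplus Kz\oplus D)\cong Z^2_{comm}((L\otimes A)\oplus D)$, where $(L\otimes A)\oplus D$ carries the brackets $[x\otimes a,y\otimes b]=[x,y]\otimes ab$, $[d,x\otimes a]=x\otimes d(a)$ and the bracket of $D$.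
   Context: $Z^2_{comm}(\mathfrak L)$ is the space of symmetric bilinear forms $\varphi$ on a Lie algebra $\mathfrak L$ with $\varphi([x,y],z)+\varphi([z,x],y)+\varphi([y,z],x)=0$ for all $x,y,z$. $HC^1(A)$ is the space of skew-symmetric bilinear forms $\alpha$ on $A$ with $\alpha(ab,c)+\alpha(ca,b)+\alpha(bc,a)=0$ for all $a,b,c\in A$. A bilinear form $\langle\cdot,\cdot\rangle$ on $L$ is invariant if $\langle[x,y],w\rangle=\langle x,[y,w]\rangle$ for all $x,y,w\in L$. *)

theory Defs
  imports Complex_Main
begin

text \<open>All vector spaces are over a field of type 'k; a K-vector space is a type
  together with a scalar multiplication s satisfying the axioms of the locale
  vector_space.\<close>

definition bilin_map ::
  "('k::field \<Rightarrow> 'u::ab_group_add \<Rightarrow> 'u) \<Rightarrow> ('k \<Rightarrow> 'v::ab_group_add \<Rightarrow> 'v) \<Rightarrow>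
   ('k \<Rightarrow> 'w::ab_group_add \<Rightarrow> 'w) \<Rightarrow> ('u \<Rightarrow> 'v \<Rightarrow> 'w) \<Rightarrow> bool" where
  "bilin_map s1 s2 s3 b \<longleftrightarrow>
     (\<forall>y. module_hom s1 s3 (\<lambda>x. b x y)) \<and> (\<forall>x. module_hom s2 s3 (b x))"

definition bilin_form :: "('k::field \<Rightarrow> 'v::ab_group_add \<Rightarrow> 'v) \<Rightarrow> ('v \<Rightarrow> 'v \<Rightarrow> 'k) \<Rightarrow> bool" where
  "bilin_form s \<phi> \<longleftrightarrow> bilin_map s s (*) \<phi>"

definition lie_algebra :: "('k::field \<Rightarrow> 'l::ab_group_add \<Rightarrow> 'l) \<Rightarrow> ('l \<Rightarrow> 'l \<Rightarrow> 'l) \<Rightarrow> bool" where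
  "lie_algebra s br \<longleftrightarrow> vector_space s \<and> bilin_map s s s br \<and> (\<forall>x. br x x = 0) \<and>
     (\<forall>x y z. br x (br y z) + br y (br z x) + br z (br x y) = 0)"

definition perfect_lie :: "('k::field \<Rightarrow> 'l::ab_group_add \<Rightarrow> 'l) \<Rightarrow> ('l \<Rightarrow> 'l \<Rightarrow> 'l) \<Rightarrow> bool" where
  "perfect_lie s br \<longleftrightarrow> module.span s {br x y | x y. True} = UNIV"

definition fin_dim :: "('k::field \<Rightarrow> 'v::ab_group_add \<Rightarrow> 'v) \<Rightarrow> bool" where
  "fin_dim s \<longleftrightarrow> (\<exists>S. finite S \<and> module.span s S = UNIV)"

definition Z2comm :: "('k::field \<Rightarrow> 'v::ab_group_add \<Rightarrow> 'v) \<Rightarrow> ('v \<Rightarrow> 'v \<Rightarrow> 'v) \<Rightarrow> ('v \<Rightarrow> 'v \<Rightarrow> 'k) set" where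
  "Z2comm s br = {\<phi>. bilin_form s \<phi> \<and> (\<forall>x y. \<phi> x y = \<phi> y x) \<and>
      (\<forall>x y z. \<phi> (br x y) z + \<phi> (br z x) y + \<phi> (br y z) x = 0)}"

definition HC1 :: "('k::field \<Rightarrow> 'a::comm_ring_1 \<Rightarrow> 'a) \<Rightarrow> ('a \<Rightarrow> 'a \<Rightarrow> 'k) set" where
  "HC1 s = {\<alpha>. bilin_form s \<alpha> \<and> (\<forall>a b. \<alpha> a b = - \<alpha> b a) \<and>
      (\<forall>a b c. \<alpha> (a * b) c + \<alpha> (c * a) b + \<alpha> (b * c) a = 0)}"

definition comm_algebra :: "('k::field \<Rightarrow> 'a::comm_ring_1 \<Rightarrow> 'a) \<Rightarrow> bool" where
  "comm_algebra s \<longleftrightarrow> vector_space s \<and> (\<forall>c a b. s c (a * b) = s c a * b)"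

definition Der :: "('k::field \<Rightarrow> 'a::comm_ring_1 \<Rightarrow> 'a) \<Rightarrow> ('a \<Rightarrow> 'a) set" where
  "Der s = {d. module_hom s s d \<and> (\<forall>a b. d (a * b) = a * d b + d a * b)}"

definition der_subalgebra :: "('k::field \<Rightarrow> 'a::comm_ring_1 \<Rightarrow> 'a) \<Rightarrow> ('a \<Rightarrow> 'a) set \<Rightarrow> bool" where
  "der_subalgebra s D \<longleftrightarrow> D \<subseteq> Der s \<and> (\<lambda>_. 0) \<in> D \<and>
     (\<forall>d\<in>D. \<forall>e\<in>D. (\<lambda>a. d a + e a) \<in> D) \<and> (\<forall>c. \<forall>d\<in>D. (\<lambda>a. s c (d a)) \<in> D) \<and>
     (\<forall>d\<in>D. \<forall>e\<in>D. (\<lambda>a. d (e a) - e (d a)) \<in> D)"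

definition invariant_form :: "('l \<Rightarrow> 'l \<Rightarrow> 'l) \<Rightarrow> ('l \<Rightarrow> 'l \<Rightarrow> 'k) \<Rightarrow> bool" where
  "invariant_form br ip \<longleftrightarrow> (\<forall>x y w. ip (br x y) w = ip x (br y w))"

text \<open>t : L x A -> V is a bilinear map identifying L \<otimes> A with the subspace
  span (range t) of V: it is bilinear and injective on L \<otimes> A, the latter expressed as:
  every bilinear form on L x A factors through a linear functional on V.
  (Over a field this characterizes span(range t) as L \<otimes> A with x \<otimes> a = t x a.)\<close>
definition tensor_embedding ::
  "('k::field \<Rightarrow> 'l::ab_group_add \<Rightarrow> 'l) \<Rightarrow> ('k \<Rightarrow> 'a::ab_group_add \<Rightarrow> 'a) \<Rightarrow>
   ('k \<Rightarrow> 'v::ab_group_add \<Rightarrow> 'v) \<Rightarrow> ('l \<Rightarrow> 'a \<Rightarrow> 'v) \<Rightarrow> bool" where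
  "tensor_embedding sL sA sV t \<longleftrightarrow> bilin_map sL sA sV t \<and>
     (\<forall>\<beta>. bilin_map sL sA (*) \<beta> \<longrightarrow>
        (\<exists>f. module_hom sV (*) f \<and> (\<forall>x a. f (t x a) = \<beta> x a)))"

definition lin_on_D ::
  "('k::field \<Rightarrow> 'a::ab_group_add \<Rightarrow> 'a) \<Rightarrow> ('k \<Rightarrow> 'v::ab_group_add \<Rightarrow> 'v) \<Rightarrow> ('a \<Rightarrow> 'a) set \<Rightarrow>
   (('a \<Rightarrow> 'a) \<Rightarrow> 'v) \<Rightarrow> bool" where
  "lin_on_D sA sV D \<iota> \<longleftrightarrow> (\<forall>d\<in>D. \<forall>e\<in>D. \<iota> (\<lambda>a. d a + e a) = \<iota> d + \<iota> e) \<and>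
     (\<forall>c. \<forall>d\<in>D. \<iota> (\<lambda>a. sA c (d a)) = sV c (\<iota> d))"

definition forms_iso :: "('u \<Rightarrow> 'u \<Rightarrow> 'k::field) set \<Rightarrow> ('v \<Rightarrow> 'v \<Rightarrow> 'k) set \<Rightarrow> bool" where
  "forms_iso V W \<longleftrightarrow> (\<exists>F. bij_betw F V W \<and>
     (\<forall>\<phi>\<in>V. \<forall>\<psi>\<in>V. F (\<lambda>u v. \<phi> u v + \<psi> u v) = (\<lambda>u v. F \<phi> u v + F \<psi> u v)) \<and>
     (\<forall>c. \<forall>\<phi>\<in>V. F (\<lambda>u v. c * \<phi> u v) = (\<lambda>u v. c * F \<phi> u v)))"

end

theory Submission
  imports Defs
begin

(*
  Write G = (L \<otimes> A) \<oplus> K z \<oplus> D and H = (L \<otimes> A) \<oplus> D. Every phi in Z2comm(G) has z in its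
  radical. Since z is central, the cyclic condition gives phi([g, h], z) = 0; as xi(a, 1) = 0, every
  [x, y] \<otimes> a is the bracket of x \<otimes> a and y \<otimes> 1, so perfectness of L gives phi(z, L \<otimes> A) = 0.
  On L \<otimes> A the cyclic condition then forces phi(x \<otimes> p, y \<otimes> q) to be symmetric in p, q (a skew
  cyclic form on a perfect Lie algebra vanishes when char K <> 2), and a symmetric cyclic form on A
  vanishes when char K <> 2, 3. Feeding this into the cyclic condition for x \<otimes> a, y \<otimes> b and
  d \<in> D along a Jacobi triple leaves 3 <[u,v],w> xi(a,b) phi(z, d) = 0, and similarly phi(z, z) = 0.
  Finally H is G / K z, and restricting forms along a linear section of the projection G -> H
  identifies the forms on G with z in their radical with Z2comm(H).
*)

section \<open>Bilinear maps and Lie algebras\<close>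

lemma
  assumes "bilin_map s1 s2 s3 b"
  shows bilin_map_add_left: "b (x + x') y = b x y + b x' y"
    and bilin_map_add_right: "b x (y + y') = b x y + b x y'"
    and bilin_map_scale_left: "b (s1 c x) y = s3 c (b x y)"
    and bilin_map_scale_right: "b x (s2 c y) = s3 c (b x y)"
    and bilin_map_zero_left: "b 0 y = 0"
    and bilin_map_zero_right: "b x 0 = 0"
    and bilin_map_neg_left: "b (- x) y = - b x y"
    and bilin_map_neg_right: "b x (- y) = - b x y"
proof -
  have l: "module_hom s1 s3 (\<lambda>x. b x y)" for y using assms unfolding bilin_map_def by blast
  have r: "module_hom s2 s3 (b x)" for x using assms unfolding bilin_map_def by blast
  show "b (x + x') y = b x y + b x' y" using module_hom.add[OF l] by simp
  show "b x (y + y') = b x y + b x y'" using module_hom.add[OF r] by simp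
  show "b (s1 c x) y = s3 c (b x y)" using module_hom.scale[OF l] by simp
  show "b x (s2 c y) = s3 c (b x y)" using module_hom.scale[OF r] by simp
  show "b 0 y = 0" using module_hom.zero[OF l] by simp
  show "b x 0 = 0" using module_hom.zero[OF r] by simp
  show "b (- x) y = - b x y" using module_hom.neg[OF l] by simp
  show "b x (- y) = - b x y" using module_hom.neg[OF r] by simp
qed

lemma module_mult_self: "module ((*) :: 'k::field \<Rightarrow> 'k \<Rightarrow> 'k)"
  by unfold_locales (auto simp: algebra_simps)

lemma bilin_mapI:
  assumes "module s1" "module s2" "module s3"
    and "\<And>x x' y. b (x + x') y = b x y + b x' y"
    and "\<And>x y y'. b x (y + y') = b x y + b x y'"
    and "\<And>c x y. b (s1 c x) y = s3 c (b x y)"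
    and "\<And>c x y. b x (s2 c y) = s3 c (b x y)"
  shows "bilin_map s1 s2 s3 b"
  using assms by (simp add: bilin_map_def module_hom_iff)

lemma bilin_map_compose_linear:
  assumes h: "module_hom s3 s4 h" and b: "bilin_map s1 s2 s3 b"
  shows "bilin_map s1 s2 s4 (\<lambda>x y. h (b x y))"
proof -
  have "module_hom s1 s4 (h \<circ> (\<lambda>x. b x y))" and "module_hom s2 s4 (h \<circ> b x)" for x y
    using b unfolding bilin_map_def by (blast intro: module_hom_compose h)+
  then show ?thesis unfolding bilin_map_def comp_def by blast
qed

lemma bilin_map_linear_compose:
  assumes f: "module_hom t1 s1 f" and g: "module_hom t2 s2 g" and b: "bilin_map s1 s2 s3 b"
  shows "bilin_map t1 t2 s3 (\<lambda>x y. b (f x) (g y))"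
proof -
  have "module_hom t1 s3 ((\<lambda>x. b x (g y)) \<circ> f)" and "module_hom t2 s3 (b (f x) \<circ> g)" for x y
    using b unfolding bilin_map_def by (blast intro: module_hom_compose f g)+
  then show ?thesis unfolding bilin_map_def comp_def by blast
qed

lemma
  assumes "\<phi> \<in> Z2comm s br"
  shows Z2comm_bilin: "bilin_map s s (*) \<phi>"
    and Z2comm_sym: "\<phi> x y = \<phi> y x"
    and Z2comm_cyclic: "\<phi> (br x y) w + \<phi> (br w x) y + \<phi> (br y w) x = 0"
  using assms unfolding Z2comm_def bilin_form_def by blast+

lemma
  assumes "lie_algebra s br"
  shows lie_algebra_vector_space: "vector_space s"
    and lie_algebra_bilin: "bilin_map s s s br"
    and lie_algebra_jacobi: "br x (br y w) + br y (br w x) + br w (br x y) = 0"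
  using assms unfolding lie_algebra_def by blast+

lemma lie_algebra_antisym:
  assumes "lie_algebra s br" shows "br y x = - br x y"
proof -
  have b: "bilin_map s s s br" and alt: "\<And>x. br x x = 0"
    using assms unfolding lie_algebra_def by auto
  have "br (x + y) (x + y) = br x y + br y x"
    unfolding bilin_map_add_left[OF b] bilin_map_add_right[OF b] by (simp add: alt)
  then have "br y x + br x y = 0" by (simp add: alt add.commute)
  then show ?thesis by (simp add: eq_neg_iff_add_eq_0)
qed

lemma lie_algebra_jacobi_right:
  assumes "lie_algebra s br" shows "br (br x y) w + br (br w x) y + br (br y w) x = 0"
proof -
  have "br (br x y) w + br (br w x) y + br (br y w) x
      = - (br w (br x y) + br x (br y w) + br y (br w x))"
    using lie_algebra_antisym[OF assms, of "br x y" w] lie_algebra_antisym[OF assms, of "br w x" y]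
      lie_algebra_antisym[OF assms, of "br y w" x] by (simp add: algebra_simps)
  also have "\<dots> = 0" using lie_algebra_jacobi[OF assms, of w x y] by (simp add: algebra_simps)
  finally show ?thesis .
qed

lemma linear_functional_separates:
  fixes s :: "'k::field \<Rightarrow> 'v::ab_group_add \<Rightarrow> 'v"
  assumes "vector_space s" and "v \<noteq> 0"
  obtains f where "module_hom s (*) f" and "f v = 1"
proof -
  interpret vector_space s by fact
  define B where "B = extend_basis {v}"
  have iv: "independent {v}" using \<open>v \<noteq> 0\<close> by simp
  have iB: "independent B" and sB: "span B = UNIV" and vB: "v \<in> B"
    using independent_extend_basis[OF iv] span_extend_basis[OF iv] extend_basis_superset[OF iv]
    unfolding B_def by auto
  show ?thesis
  proof
    show "module_hom s (*) (\<lambda>x. representation B x v)"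
      using linear_representation[OF iB sB] by (simp add: module_hom_iff_linear)
    show "representation B v v = 1" by (simp add: representation_basis[OF iB vB])
  qed
qed

section \<open>Identifying two realisations of L \<otimes> A\<close>

lemma tensor_embedding_bilin: "tensor_embedding sL sA sV t \<Longrightarrow> bilin_map sL sA sV t"
  unfolding tensor_embedding_def by blast

lemma tensor_embedding_vector_space:
  fixes sV :: "'k::field \<Rightarrow> 'v::ab_group_add \<Rightarrow> 'v"
  assumes "tensor_embedding sL sA sV t"
  shows "vector_space sV"
  using tensor_embedding_bilin[OF assms]
  unfolding bilin_map_def module_hom_def module_iff_vector_space by blast

definition tensor_lift ::
  "('k::field \<Rightarrow> 'v::ab_group_add \<Rightarrow> 'v) \<Rightarrow> ('l \<Rightarrow> 'a \<Rightarrow> 'v) \<Rightarrow> ('l \<Rightarrow> 'a \<Rightarrow> 'k) \<Rightarrow> 'v \<Rightarrow> 'k" where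
  "tensor_lift sV t \<beta> = (SOME f. module_hom sV (*) f \<and> (\<forall>x a. f (t x a) = \<beta> x a))"

lemma
  assumes "tensor_embedding sL sA sV t" and "bilin_map sL sA (*) \<beta>"
  shows tensor_lift_linear: "module_hom sV (*) (tensor_lift sV t \<beta>)"
    and tensor_lift_tensor: "tensor_lift sV t \<beta> (t x a) = \<beta> x a"
proof -
  have "\<exists>f. module_hom sV (*) f \<and> (\<forall>x a. f (t x a) = \<beta> x a)"
    using assms unfolding tensor_embedding_def by blast
  from someI_ex[OF this] show "module_hom sV (*) (tensor_lift sV t \<beta>)" "tensor_lift sV t \<beta> (t x a) = \<beta> x a"
    unfolding tensor_lift_def by auto
qed

lemma tensor_lifts_separate:
  fixes sW :: "'k::field \<Rightarrow> 'w::ab_group_add \<Rightarrow> 'w"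
  assumes te: "tensor_embedding sL sA sW t"
    and w: "w \<in> module.span sW (range (case_prod t))" and w': "w' \<in> module.span sW (range (case_prod t))"
    and lifts: "\<And>\<beta>. bilin_map sL sA (*) \<beta> \<Longrightarrow> tensor_lift sW t \<beta> w = tensor_lift sW t \<beta> w'"
  shows "w = w'"
proof (rule ccontr)
  assume "w \<noteq> w'"
  interpret W: vector_space sW by (rule tensor_embedding_vector_space[OF te])
  have "w - w' \<noteq> 0" using \<open>w \<noteq> w'\<close> by simp
  then obtain g where g: "module_hom sW (*) g" and g1: "g (w - w') = 1"
    by (rule linear_functional_separates[OF W.vector_space_axioms])
  interpret g: module_hom sW "(*)" g by (rule g)
  have bil: "bilin_map sL sA (*) (\<lambda>x a. g (t x a))"
    by (rule bilin_map_compose_linear[OF g tensor_embedding_bilin[OF te]])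
  interpret Wk: module_pair sW "(*)" by (intro module_pair.intro W.module_axioms module_mult_self)
  have lift_g: "tensor_lift sW t (\<lambda>x a. g (t x a)) v = g v"
    if "v \<in> module.span sW (range (case_prod t))" for v
    by (rule Wk.module_hom_eq_on_span[OF tensor_lift_linear[OF te bil] g _ that])
      (auto simp: tensor_lift_tensor[OF te bil])
  have "g w = g w'" using lift_g[OF w] lift_g[OF w'] lifts[OF bil] by simp
  then show False using g1 by (simp add: g.diff)
qed

text \<open>The canonical isomorphism between the two copies of L \<otimes> A: an element of the second copy
  is determined by the functionals induced on it by all bilinear forms on L \<times> A.\<close>

definition tensor_transfer ::
  "('k::field \<Rightarrow> 'l::ab_group_add \<Rightarrow> 'l) \<Rightarrow> ('k \<Rightarrow> 'a::ab_group_add \<Rightarrow> 'a) \<Rightarrow> ('k \<Rightarrow> 'v::ab_group_add \<Rightarrow> 'v) \<Rightarrow> ('l \<Rightarrow> 'a \<Rightarrow> 'v) \<Rightarrow>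
   ('k \<Rightarrow> 'w::ab_group_add \<Rightarrow> 'w) \<Rightarrow> ('l \<Rightarrow> 'a \<Rightarrow> 'w) \<Rightarrow> 'v \<Rightarrow> 'w" where
  "tensor_transfer sL sA sV tV sW tW v = (THE w. w \<in> module.span sW (range (case_prod tW)) \<and>
     (\<forall>\<beta>. bilin_map sL sA (*) \<beta> \<longrightarrow> tensor_lift sV tV \<beta> v = tensor_lift sW tW \<beta> w))"

locale tensor_embedding_pair =
  fixes sL :: "'k::field \<Rightarrow> 'l::ab_group_add \<Rightarrow> 'l" and sA :: "'k \<Rightarrow> 'a::ab_group_add \<Rightarrow> 'a"
    and sV :: "'k \<Rightarrow> 'v::ab_group_add \<Rightarrow> 'v" and tV :: "'l \<Rightarrow> 'a \<Rightarrow> 'v"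
    and sW :: "'k \<Rightarrow> 'w::ab_group_add \<Rightarrow> 'w" and tW :: "'l \<Rightarrow> 'a \<Rightarrow> 'w"
  assumes embV: "tensor_embedding sL sA sV tV" and embW: "tensor_embedding sL sA sW tW"
begin

abbreviation "SV \<equiv> module.span sV (range (case_prod tV))"
abbreviation "SW \<equiv> module.span sW (range (case_prod tW))"
abbreviation "T \<equiv> tensor_transfer sL sA sV tV sW tW"
abbreviation "same_lifts v w \<equiv>
  \<forall>\<beta>. bilin_map sL sA (*) \<beta> \<longrightarrow> tensor_lift sV tV \<beta> v = tensor_lift sW tW \<beta> w"

sublocale V: vector_space sV by (rule tensor_embedding_vector_space[OF embV])
sublocale W: vector_space sW by (rule tensor_embedding_vector_space[OF embW])

lemma transfer_exists:
  assumes "v \<in> SV" shows "\<exists>w\<in>SW. same_lifts v w"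
  using assms
proof (induction rule: V.span_induct)
  case base
  let ?P = "{v. \<exists>w\<in>SW. same_lifts v w}"
  have liftV: "module_hom sV (*) (tensor_lift sV tV \<beta>)"
    and liftW: "module_hom sW (*) (tensor_lift sW tW \<beta>)" if "bilin_map sL sA (*) \<beta>" for \<beta>
    using tensor_lift_linear[OF embV that] tensor_lift_linear[OF embW that] .
  show "V.subspace ?P"
    unfolding V.subspace_def
  proof (intro conjI ballI allI)
    have "same_lifts 0 0" by (simp add: module_hom.zero[OF liftV] module_hom.zero[OF liftW])
    then show "0 \<in> ?P" using W.span_zero by blast
    show "x + y \<in> ?P" if x: "x \<in> ?P" and y: "y \<in> ?P" for x y
    proof -
      obtain w1 w2 where "w1 \<in> SW" "same_lifts x w1" "w2 \<in> SW" "same_lifts y w2"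
        using x y by blast
      moreover from this have "same_lifts (x + y) (w1 + w2)"
        by (simp add: module_hom.add[OF liftV] module_hom.add[OF liftW])
      ultimately show ?thesis using W.span_add by blast
    qed
    show "sV c x \<in> ?P" if x: "x \<in> ?P" for c x
    proof -
      obtain w where "w \<in> SW" "same_lifts x w" using x by blast
      moreover from this have "same_lifts (sV c x) (sW c w)"
        by (simp add: module_hom.scale[OF liftV] module_hom.scale[OF liftW])
      ultimately show ?thesis using W.span_scale by blast
    qed
  qed
next
  case (step v)
  then obtain x a where v: "v = tV x a" by auto
  have "tW x a \<in> SW" by (rule W.span_base) auto
  moreover have "same_lifts v (tW x a)"
    unfolding v by (simp add: tensor_lift_tensor[OF embV] tensor_lift_tensor[OF embW])
  ultimately show ?case by blast
qed

lemma transfer_spec: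
  assumes "v \<in> SV" shows "T v \<in> SW \<and> same_lifts v (T v)"
proof -
  obtain w where w: "w \<in> SW" "same_lifts v w" using transfer_exists[OF assms] by blast
  have "w' = w" if "w' \<in> SW \<and> same_lifts v w'" for w'
    using tensor_lifts_separate[OF embW, of w' w] that w by simp
  with w have "\<exists>!w. w \<in> SW \<and> same_lifts v w" by blast
  then show ?thesis unfolding tensor_transfer_def by (rule theI')
qed

lemma transfer_in: "v \<in> SV \<Longrightarrow> T v \<in> SW"
  using transfer_spec by blast

lemma transfer_eqI: "v \<in> SV \<Longrightarrow> w \<in> SW \<Longrightarrow> same_lifts v w \<Longrightarrow> T v = w"
  using transfer_spec tensor_lifts_separate[OF embW, of "T v" w] by metis

lemma transfer_add: "v1 \<in> SV \<Longrightarrow> v2 \<in> SV \<Longrightarrow> T (v1 + v2) = T v1 + T v2"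
  using transfer_spec[of v1] transfer_spec[of v2]
  by (intro transfer_eqI V.span_add W.span_add)
    (auto simp: module_hom.add[OF tensor_lift_linear[OF embV]] module_hom.add[OF tensor_lift_linear[OF embW]])

lemma transfer_scale: "v \<in> SV \<Longrightarrow> T (sV c v) = sW c (T v)"
  using transfer_spec[of v]
  by (intro transfer_eqI V.span_scale W.span_scale)
    (auto simp: module_hom.scale[OF tensor_lift_linear[OF embV]] module_hom.scale[OF tensor_lift_linear[OF embW]])

lemma transfer_tensor: "T (tV x a) = tW x a"
  by (intro transfer_eqI V.span_base W.span_base)
    (auto simp: tensor_lift_tensor[OF embV] tensor_lift_tensor[OF embW])

lemma transfer_zero: "T 0 = 0"
  using transfer_add[OF V.span_zero V.span_zero] by simp

lemma transfer_inverse: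
  assumes "v \<in> SV" shows "tensor_transfer sL sA sW tW sV tV (T v) = v"
proof -
  interpret inv: tensor_embedding_pair sL sA sW tW sV tV by (unfold_locales; fact embW embV)
  show ?thesis using transfer_spec[OF assms] assms by (intro inv.transfer_eqI) auto
qed

end

section \<open>Vanishing of cyclic forms\<close>

lemma perfect_lie_functional_vanishes:
  fixes f :: "'l::ab_group_add \<Rightarrow> 'k::field"
  assumes L: "lie_algebra sL brL" and perf: "perfect_lie sL brL"
    and add: "\<And>x y. f (x + y) = f x + f y" and scale: "\<And>c x. f (sL c x) = c * f x"
    and brackets: "\<And>x y. f (brL x y) = 0"
  shows "f x = 0"
proof -
  interpret L: vector_space sL by (rule lie_algebra_vector_space[OF L])
  interpret f: module_hom sL "(*)" f
    by (simp add: module_hom_iff L.module_axioms module_mult_self add scale)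
  show ?thesis
    using f.eq_0_on_span[of "{brL x y | x y. True}" x] brackets perf
    unfolding perfect_lie_def by blast
qed

lemma perfect_lie_cyclic_skew_form_vanishes:
  fixes \<Psi> :: "'l::ab_group_add \<Rightarrow> 'l \<Rightarrow> 'k::field"
  assumes L: "lie_algebra sL brL" and perf: "perfect_lie sL brL" and char2: "(2::'k) \<noteq> 0"
    and bil: "bilin_map sL sL (*) \<Psi>" and skew: "\<And>x y. \<Psi> y x = - \<Psi> x y"
    and cyclic: "\<And>u v w. \<Psi> (brL u v) w = \<Psi> (brL v w) u"
  shows "\<Psi> x y = 0"
proof -
  note anti = lie_algebra_antisym[OF L]
  note neg = bilin_map_neg_left[OF bil] bilin_map_neg_right[OF bil]
  have bianchi: "\<Psi> (brL a b) (brL c d) + \<Psi> (brL c b) (brL d a) + \<Psi> (brL d b) (brL a c) = 0"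
    for a b c d
  proof -
    have "\<Psi> (brL (brL c d) a + brL (brL d a) c + brL (brL a c) d) b = 0"
      using lie_algebra_jacobi_right[OF L, of c d a] bilin_map_zero_left[OF bil]
      by (simp add: add.commute add.left_commute)
    then show ?thesis
      using cyclic[of "brL c d" a b] cyclic[of "brL d a" c b] cyclic[of "brL a c" d b]
      by (simp add: bilin_map_add_left[OF bil])
  qed
  have on_brackets: "\<Psi> (brL a b) (brL c d) = 0" for a b c d
  proof -
    have "\<Psi> (brL b a) (brL c d) + \<Psi> (brL c a) (brL d b) + \<Psi> (brL d a) (brL b c) = 0"
      by (rule bianchi)
    moreover have "\<Psi> (brL c b) (brL d a) = - \<Psi> (brL a d) (brL b c)"
      using anti[of b c] anti[of a d] skew[of "brL a d" "brL b c"] by (simp add: neg)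
    moreover have "\<Psi> (brL d b) (brL a c) = \<Psi> (brL c a) (brL d b)"
      using anti[of a c] anti[of b d] skew[of "brL a c" "brL b d"] by (simp add: neg)
    moreover have "\<Psi> (brL b a) (brL c d) = - \<Psi> (brL a b) (brL c d)"
      using anti[of a b] by (simp add: neg)
    moreover have "\<Psi> (brL d a) (brL b c) = - \<Psi> (brL a d) (brL b c)"
      using anti[of a d] by (simp add: neg)
    ultimately have "2 * \<Psi> (brL a b) (brL c d) = 0"
      using bianchi[of a b c d] by (simp add: algebra_simps)
    then show ?thesis using char2 by simp
  qed
  have bracket_right: "\<Psi> x (brL c d) = 0" for x c d
    by (rule perfect_lie_functional_vanishes[OF L perf, where f="\<lambda>x. \<Psi> x (brL c d)"])
      (simp_all add: on_brackets bilin_map_add_left[OF bil] bilin_map_scale_left[OF bil])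
  show ?thesis
    by (rule perfect_lie_functional_vanishes[OF L perf, where f="\<Psi> x"])
      (simp_all add: bracket_right bilin_map_add_right[OF bil] bilin_map_scale_right[OF bil])
qed

lemma cyclic_symmetric_form_vanishes:
  fixes M :: "'a::comm_ring_1 \<Rightarrow> 'a \<Rightarrow> 'k::field"
  assumes char2: "(2::'k) \<noteq> 0" and char3: "(3::'k) \<noteq> 0"
    and sym: "\<And>p q. M p q = M q p"
    and cyclic: "\<And>a b c. M (a * b) c + M (c * a) b + M (b * c) a = 0"
  shows "M p q = 0"
proof -
  have "M r 1 = 0" for r
  proof -
    have "3 * M r 1 = 0" using cyclic[of r 1 1] sym[of 1 r] by simp
    then show ?thesis using char3 by simp
  qed
  then have "2 * M p q = 0" using cyclic[of p q 1] sym[of q p] by simp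
  then show ?thesis using char2 by simp
qed

lemma HC1_unit_right:
  assumes "\<xi> \<in> HC1 s" shows "\<xi> a 1 = 0"
proof -
  have "\<xi> (a * 1) 1 + \<xi> (1 * a) 1 + \<xi> (1 * 1) a = 0" and "\<xi> 1 a = - \<xi> a 1"
    using assms unfolding HC1_def by blast+
  then show ?thesis by simp
qed

section \<open>Forms on the quotient by a radical element\<close>

lemma Z2comm_pullback:
  fixes f :: "'v::ab_group_add \<Rightarrow> 'w::ab_group_add"
  assumes f: "module_hom sV sW f" and \<phi>: "\<phi> \<in> Z2comm sW brW"
    and bracket: "\<And>x y e. \<phi> (f (brV x y)) (f e) = \<phi> (brW (f x) (f y)) (f e)"
  shows "(\<lambda>x y. \<phi> (f x) (f y)) \<in> Z2comm sV brV"
proof -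
  have "bilin_map sV sV (*) (\<lambda>x y. \<phi> (f x) (f y))"
    by (rule bilin_map_linear_compose[OF f f Z2comm_bilin[OF \<phi>]])
  moreover have "\<phi> (f (brV x y)) (f w) + \<phi> (f (brV w x)) (f y) + \<phi> (f (brV y w)) (f x) = 0" for x y w
    using Z2comm_cyclic[OF \<phi>, of "f x" "f y" "f w"] by (simp only: bracket)
  ultimately show ?thesis
    unfolding Z2comm_def bilin_form_def using Z2comm_sym[OF \<phi>] by blast
qed

lemma Z2comm_iso_quotient_by_radical_element:
  fixes sG :: "'k::field \<Rightarrow> 'g::ab_group_add \<Rightarrow> 'g" and sH :: "'k \<Rightarrow> 'h::ab_group_add \<Rightarrow> 'h"
  assumes \<pi>: "module_hom sG sH \<pi>" and \<sigma>: "module_hom sH sG \<sigma>"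
    and hom: "\<And>x y. \<pi> (brG x y) = brH (\<pi> x) (\<pi> y)"
    and right_inverse: "\<And>h. \<pi> (\<sigma> h) = h"
    and fibres: "\<And>g. \<exists>c. g = \<sigma> (\<pi> g) + sG c z"
    and radical: "\<And>\<phi> g. \<phi> \<in> Z2comm sG brG \<Longrightarrow> \<phi> z g = 0"
  shows "forms_iso (Z2comm sG brG) (Z2comm sH brH)"
proof -
  define F where "F \<phi> = (\<lambda>h1 h2. \<phi> (\<sigma> h1) (\<sigma> h2))" for \<phi> :: "'g \<Rightarrow> 'g \<Rightarrow> 'k"
  define G where "G \<psi> = (\<lambda>g1 g2. \<psi> (\<pi> g1) (\<pi> g2))" for \<psi> :: "'h \<Rightarrow> 'h \<Rightarrow> 'k"
  have modulo_z: "\<phi> g e = \<phi> (\<sigma> (\<pi> g)) e" if \<phi>: "\<phi> \<in> Z2comm sG brG" for \<phi> g e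
  proof -
    note bil = Z2comm_bilin[OF \<phi>]
    obtain c where c: "g = \<sigma> (\<pi> g) + sG c z" using fibres by blast
    have "\<phi> g e = \<phi> (\<sigma> (\<pi> g) + sG c z) e" using arg_cong[OF c, of "\<lambda>x. \<phi> x e"] .
    also have "\<dots> = \<phi> (\<sigma> (\<pi> g)) e + c * \<phi> z e"
      by (simp add: bilin_map_add_left[OF bil] bilin_map_scale_left[OF bil])
    finally show ?thesis using radical[OF \<phi>] by simp
  qed
  have F: "F \<phi> \<in> Z2comm sH brH" if \<phi>: "\<phi> \<in> Z2comm sG brG" for \<phi>
    unfolding F_def
    by (rule Z2comm_pullback[OF \<sigma> \<phi>])
      (use modulo_z[OF \<phi>, of "brG (\<sigma> x) (\<sigma> y)" "\<sigma> e" for x y e] in \<open>simp add: hom right_inverse\<close>)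
  have G: "G \<psi> \<in> Z2comm sG brG" if "\<psi> \<in> Z2comm sH brH" for \<psi>
    unfolding G_def by (rule Z2comm_pullback[OF \<pi> that]) (simp add: hom)
  have GF: "G (F \<phi>) = \<phi>" if \<phi>: "\<phi> \<in> Z2comm sG brG" for \<phi>
  proof (intro ext)
    fix g1 g2
    have "\<phi> g1 g2 = \<phi> g2 (\<sigma> (\<pi> g1))"
      using modulo_z[OF \<phi>, of g1 g2] Z2comm_sym[OF \<phi>] by simp
    also have "\<dots> = \<phi> (\<sigma> (\<pi> g1)) (\<sigma> (\<pi> g2))"
      using modulo_z[OF \<phi>, of g2 "\<sigma> (\<pi> g1)"] Z2comm_sym[OF \<phi>] by simp
    finally show "G (F \<phi>) g1 g2 = \<phi> g1 g2" unfolding F_def G_def by simp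
  qed
  have FG: "F (G \<psi>) = \<psi>" for \<psi>
    unfolding F_def G_def right_inverse ..
  have "bij_betw F (Z2comm sG brG) (Z2comm sH brH)"
    by (rule bij_betw_byWitness[where f'=G]) (auto simp: F G GF FG)
  then show ?thesis
    unfolding forms_iso_def by (intro exI[of _ F]) (simp add: F_def)
qed

section \<open>The central element lies in the radical\<close>

locale central_current_extension =
  fixes sL :: "'k::field \<Rightarrow> 'l::ab_group_add \<Rightarrow> 'l" and brL :: "'l \<Rightarrow> 'l \<Rightarrow> 'l"
    and sA :: "'k \<Rightarrow> 'a::comm_ring_1 \<Rightarrow> 'a" and D :: "('a \<Rightarrow> 'a) set"
    and ip :: "'l \<Rightarrow> 'l \<Rightarrow> 'k" and \<xi> :: "'a \<Rightarrow> 'a \<Rightarrow> 'k"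
    and sG :: "'k \<Rightarrow> 'g::ab_group_add \<Rightarrow> 'g" and brG :: "'g \<Rightarrow> 'g \<Rightarrow> 'g"
    and tG :: "'l \<Rightarrow> 'a \<Rightarrow> 'g" and z :: 'g and \<iota>G :: "('a \<Rightarrow> 'a) \<Rightarrow> 'g"
  assumes char2: "(2::'k) \<noteq> 0" and char3: "(3::'k) \<noteq> 0"
    and L_lie: "lie_algebra sL brL" and perf: "perfect_lie sL brL"
    and ip_bilin: "bilin_form sL ip" and ip_sym: "\<And>x y. ip x y = ip y x"
    and ip_invariant: "invariant_form brL ip" and ip_nonzero: "ip \<noteq> (\<lambda>x y. 0)"
    and xi: "\<xi> \<in> HC1 sA" and xi_nonzero: "\<xi> \<noteq> (\<lambda>a b. 0)"
    and G_lie: "lie_algebra sG brG"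
    and G_tensor: "tensor_embedding sL sA sG tG"
    and G_sum: "\<And>g. \<exists>t c d. t \<in> module.span sG (range (case_prod tG)) \<and> d \<in> D \<and>
                  g = t + sG c z + \<iota>G d"
    and G_tensor_bracket: "\<And>x y a b. brG (tG x a) (tG y b) = tG (brL x y) (a * b) + sG (ip x y * \<xi> a b) z"
    and G_derivation_bracket: "\<And>d x a. d \<in> D \<Longrightarrow> brG (\<iota>G d) (tG x a) = tG x (d a)"
    and G_central: "\<And>g. brG z g = 0"
begin

sublocale L: vector_space sL by (rule lie_algebra_vector_space[OF L_lie])
sublocale G: vector_space sG by (rule lie_algebra_vector_space[OF G_lie])

lemma tensor_bracket_unit: "brG (tG x a) (tG y 1) = tG (brL x y) a"
  using G_tensor_bracket[of x a y 1] HC1_unit_right[OF xi] by simp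

lemma invariant_form_bracket_nonzero: "\<exists>u v w. ip (brL u v) w \<noteq> 0"
proof (rule ccontr)
  assume "\<not> ?thesis"
  then have brackets: "ip (brL u v) w = 0" for u v w by blast
  have bil: "bilin_map sL sL (*) ip" using ip_bilin unfolding bilin_form_def .
  have "ip x w = 0" for x w
    by (rule perfect_lie_functional_vanishes[OF L_lie perf, where f="\<lambda>x. ip x w"])
      (simp_all add: brackets bilin_map_add_left[OF bil] bilin_map_scale_left[OF bil])
  then show False using ip_nonzero by blast
qed

lemma invariant_form_cyclic: "ip (brL w u) v = ip (brL u v) w"
proof -
  have "ip (brL w u) v = ip w (brL u v)" using ip_invariant unfolding invariant_form_def by blast
  then show ?thesis using ip_sym by simp
qed

context
  fixes \<phi> :: "'g \<Rightarrow> 'g \<Rightarrow> 'k"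
  assumes \<phi>: "\<phi> \<in> Z2comm sG brG"
begin

private lemmas \<phi>_bil = Z2comm_bilin[OF \<phi>] and \<phi>_sym = Z2comm_sym[OF \<phi>]

lemma Z2comm_brackets_orthogonal_center: "\<phi> (brG g1 g2) z = 0"
proof -
  have "brG g2 z = 0" using lie_algebra_antisym[OF G_lie, of z g2] G_central by simp
  then show ?thesis
    using Z2comm_cyclic[OF \<phi>, of g1 g2 z] G_central by (simp add: bilin_map_zero_left[OF \<phi>_bil])
qed

lemma Z2comm_center_orthogonal_tensors: "\<phi> z (tG x a) = 0"
proof (rule perfect_lie_functional_vanishes[OF L_lie perf, where f="\<lambda>x. \<phi> z (tG x a)"])
  have t: "bilin_map sL sA sG tG" by (rule tensor_embedding_bilin[OF G_tensor])
  show "\<phi> z (tG (x + y) a) = \<phi> z (tG x a) + \<phi> z (tG y a)" for x y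
    by (simp add: bilin_map_add_left[OF t] bilin_map_add_right[OF \<phi>_bil])
  show "\<phi> z (tG (sL c x) a) = c * \<phi> z (tG x a)" for c x
    by (simp add: bilin_map_scale_left[OF t] bilin_map_scale_right[OF \<phi>_bil])
  show "\<phi> z (tG (brL x y) a) = 0" for x y
    using Z2comm_brackets_orthogonal_center[of "tG x a" "tG y 1"] \<phi>_sym by (simp add: tensor_bracket_unit)
qed

lemma Z2comm_tensor_bracket: "\<phi> (brG (tG x a) (tG y b)) (tG w c) = \<phi> (tG (brL x y) (a * b)) (tG w c)"
  by (simp add: Z2comm_center_orthogonal_tensors G_tensor_bracket bilin_map_add_left[OF \<phi>_bil] bilin_map_scale_left[OF \<phi>_bil])

lemma Z2comm_tensor_cyclic:
  "\<phi> (tG (brL u v) (a * b)) (tG w c) + \<phi> (tG (brL w u) (c * a)) (tG v b)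
     + \<phi> (tG (brL v w) (b * c)) (tG u a) = 0"
  using Z2comm_cyclic[OF \<phi>, of "tG u a" "tG v b" "tG w c"] by (simp add: Z2comm_tensor_bracket)

lemma Z2comm_tensor_swap: "\<phi> (tG x p) (tG y q) = \<phi> (tG x q) (tG y p)"
proof -
  define \<Psi> where "\<Psi> x y = \<phi> (tG x p) (tG y q) - \<phi> (tG x q) (tG y p)" for x y
  have t: "bilin_map sL sA sG tG" by (rule tensor_embedding_bilin[OF G_tensor])
  have "bilin_map sL sL (*) \<Psi>"
    unfolding \<Psi>_def
    by (intro bilin_mapI L.module_axioms module_mult_self)
      (simp_all add: bilin_map_add_left[OF t] bilin_map_scale_left[OF t] bilin_map_add_left[OF \<phi>_bil]
        bilin_map_scale_left[OF \<phi>_bil] bilin_map_add_right[OF \<phi>_bil] bilin_map_scale_right[OF \<phi>_bil]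
        algebra_simps)
  moreover have "\<Psi> y x = - \<Psi> x y" for x y
    unfolding \<Psi>_def using \<phi>_sym[of "tG y p"] \<phi>_sym[of "tG y q"] by simp
  moreover have "\<Psi> (brL u v) w = \<Psi> (brL v w) u" for u v w
  proof -
    \<comment> \<open>the cyclic identity with the unit in the middle slot, once for each order of p and q\<close>
    have "\<phi> (tG (brL u v) p) (tG w q) + \<phi> (tG (brL w u) (q * p)) (tG v 1) + \<phi> (tG (brL v w) q) (tG u p) = 0"
      using Z2comm_tensor_cyclic[of u v p 1 w q] by (simp add: mult.commute)
    moreover have "\<phi> (tG (brL u v) q) (tG w p) + \<phi> (tG (brL w u) (q * p)) (tG v 1) + \<phi> (tG (brL v w) p) (tG u q) = 0"
      using Z2comm_tensor_cyclic[of u v q 1 w p] by (simp add: mult.commute)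
    ultimately show ?thesis unfolding \<Psi>_def by algebra
  qed
  ultimately have "\<Psi> x y = 0"
    by (rule perfect_lie_cyclic_skew_form_vanishes[OF L_lie perf char2])
  then show ?thesis unfolding \<Psi>_def by simp
qed

lemma Z2comm_tensor_bracket_sum:
  "\<phi> (tG (brL u v) p) (tG w q) + \<phi> (tG (brL w u) p) (tG v q) + \<phi> (tG (brL v w) p) (tG u q) = 0"
proof (rule cyclic_symmetric_form_vanishes[OF char2 char3,
      where M="\<lambda>p q. \<phi> (tG (brL u v) p) (tG w q) + \<phi> (tG (brL w u) p) (tG v q) + \<phi> (tG (brL v w) p) (tG u q)"])
  show "\<phi> (tG (brL u v) p) (tG w q) + \<phi> (tG (brL w u) p) (tG v q) + \<phi> (tG (brL v w) p) (tG u q) =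
        \<phi> (tG (brL u v) q) (tG w p) + \<phi> (tG (brL w u) q) (tG v p) + \<phi> (tG (brL v w) q) (tG u p)" for p q
    by (simp add: Z2comm_tensor_swap[of _ p _ q])
  show "(\<phi> (tG (brL u v) (a * b)) (tG w c) + \<phi> (tG (brL w u) (a * b)) (tG v c) + \<phi> (tG (brL v w) (a * b)) (tG u c))
      + (\<phi> (tG (brL u v) (c * a)) (tG w b) + \<phi> (tG (brL w u) (c * a)) (tG v b) + \<phi> (tG (brL v w) (c * a)) (tG u b))
      + (\<phi> (tG (brL u v) (b * c)) (tG w a) + \<phi> (tG (brL w u) (b * c)) (tG v a) + \<phi> (tG (brL v w) (b * c)) (tG u a))
      = 0" for a b c
    using Z2comm_tensor_cyclic[of u v a b w c] Z2comm_tensor_cyclic[of w u a b v c]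
      Z2comm_tensor_cyclic[of v w a b u c] by algebra
qed

lemma Z2comm_derivation_cyclic:
  assumes d: "d \<in> D"
  shows "\<phi> (tG (brL x y) (a * b)) (\<iota>G d) + ip x y * \<xi> a b * \<phi> z (\<iota>G d)
      + \<phi> (tG x (d a)) (tG y b) - \<phi> (tG x a) (tG y (d b)) = 0"
proof -
  have "brG (tG y b) (\<iota>G d) = - tG y (d b)"
    using lie_algebra_antisym[OF G_lie, of "\<iota>G d" "tG y b"] G_derivation_bracket[OF d] by simp
  then show ?thesis
    using Z2comm_cyclic[OF \<phi>, of "tG x a" "tG y b" "\<iota>G d"] \<phi>_sym[of "tG y (d b)" "tG x a"]
    by (simp add: G_tensor_bracket G_derivation_bracket[OF d] bilin_map_add_left[OF \<phi>_bil]
        bilin_map_scale_left[OF \<phi>_bil] bilin_map_neg_left[OF \<phi>_bil])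
qed

lemma Z2comm_center_orthogonal_derivations:
  assumes d: "d \<in> D"
  shows "\<phi> z (\<iota>G d) = 0"
proof -
  obtain u v w where s: "ip (brL u v) w \<noteq> 0" using invariant_form_bracket_nonzero by blast
  obtain a b where xi_ab: "\<xi> a b \<noteq> 0" using xi_nonzero by blast
  have t: "bilin_map sL sA sG tG" by (rule tensor_embedding_bilin[OF G_tensor])
  have "\<phi> (tG (brL (brL u v) w + brL (brL w u) v + brL (brL v w) u) (a * b)) (\<iota>G d) = 0"
    unfolding lie_algebra_jacobi_right[OF L_lie]
    by (simp add: bilin_map_zero_left[OF t] bilin_map_zero_left[OF \<phi>_bil])
  then have jacobi: "\<phi> (tG (brL (brL u v) w) (a * b)) (\<iota>G d) + \<phi> (tG (brL (brL w u) v) (a * b)) (\<iota>G d)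
      + \<phi> (tG (brL (brL v w) u) (a * b)) (\<iota>G d) = 0"
    by (simp add: bilin_map_add_left[OF t] bilin_map_add_left[OF \<phi>_bil])
  \<comment> \<open>summing over the cyclic permutations of u, v, w, the tensor terms cancel by the Jacobi identity
    and by the previous lemma, while the invariant form contributes the same value three times\<close>
  have "3 * (ip (brL u v) w * \<xi> a b * \<phi> z (\<iota>G d)) = 0"
    using Z2comm_derivation_cyclic[OF d, of "brL u v" w a b] Z2comm_derivation_cyclic[OF d, of "brL w u" v a b]
      Z2comm_derivation_cyclic[OF d, of "brL v w" u a b] jacobi
      Z2comm_tensor_bracket_sum[of u v "d a" w b] Z2comm_tensor_bracket_sum[of u v a w "d b"]
      invariant_form_cyclic[of w u v] invariant_form_cyclic[of v w u]
    by algebra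
  then show ?thesis using char3 s xi_ab by simp
qed

lemma Z2comm_center_isotropic: "\<phi> z z = 0"
proof -
  obtain x y where ip_xy: "ip x y \<noteq> 0" using ip_nonzero by blast
  obtain a b where xi_ab: "\<xi> a b \<noteq> 0" using xi_nonzero by blast
  have "\<phi> (brG (tG x a) (tG y b)) z = 0" by (rule Z2comm_brackets_orthogonal_center)
  then have "ip x y * \<xi> a b * \<phi> z z = 0"
    using Z2comm_center_orthogonal_tensors \<phi>_sym[of "tG (brL x y) (a * b)" z]
    by (simp add: G_tensor_bracket bilin_map_add_left[OF \<phi>_bil] bilin_map_scale_left[OF \<phi>_bil])
  then show ?thesis using ip_xy xi_ab by simp
qed

lemma Z2comm_center_radical: "\<phi> z g = 0"
proof -
  obtain t c d where t: "t \<in> module.span sG (range (case_prod tG))" and d: "d \<in> D"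
    and g: "g = t + sG c z + \<iota>G d"
    using G_sum by blast
  interpret \<phi>z: module_hom sG "(*)" "\<phi> z" using \<phi>_bil unfolding bilin_map_def by blast
  have "\<phi> z t = 0"
    by (rule \<phi>z.eq_0_on_span[OF _ t]) (auto simp: Z2comm_center_orthogonal_tensors)
  then show ?thesis
    by (simp add: g \<phi>z.add \<phi>z.scale Z2comm_center_isotropic Z2comm_center_orthogonal_derivations[OF d])
qed

end

end

section \<open>The projection onto the unextended algebra\<close>

lemma bilin_map_eq_on_span:
  assumes f: "bilin_map s1 s2 s3 f" and g: "bilin_map s1 s2 s3 g"
    and agree: "\<And>x y. x \<in> B1 \<Longrightarrow> y \<in> B2 \<Longrightarrow> f x y = g x y"
    and x: "x \<in> module.span s1 B1" and y: "y \<in> module.span s2 B2"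
  shows "f x y = g x y"
proof -
  have m1: "module s1" and m2: "module s2" and m3: "module s3"
    using f unfolding bilin_map_def module_hom_def by blast+
  interpret right: module_pair s2 s3 by (intro module_pair.intro m2 m3)
  interpret left: module_pair s1 s3 by (intro module_pair.intro m1 m3)
  have f_right: "module_hom s2 s3 (f x')" and g_right: "module_hom s2 s3 (g x')" for x'
    using f g unfolding bilin_map_def by blast+
  have f_left: "module_hom s1 s3 (\<lambda>x. f x y')" and g_left: "module_hom s1 s3 (\<lambda>x. g x y')" for y'
    using f g unfolding bilin_map_def by blast+
  have "f x' y = g x' y" if "x' \<in> B1" for x'
    by (rule right.module_hom_eq_on_span[OF f_right g_right _ y]) (rule agree[OF that])
  then show ?thesis
    by (rule left.module_hom_eq_on_span[OF f_left g_left _ x])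
qed

lemma
  assumes "der_subalgebra s D"
  shows der_subalgebra_zero: "(\<lambda>_. 0) \<in> D"
    and der_subalgebra_add: "d \<in> D \<Longrightarrow> e \<in> D \<Longrightarrow> (\<lambda>a. d a + e a) \<in> D"
    and der_subalgebra_scale: "d \<in> D \<Longrightarrow> (\<lambda>a. s c (d a)) \<in> D"
    and der_subalgebra_bracket: "d \<in> D \<Longrightarrow> e \<in> D \<Longrightarrow> (\<lambda>a. d (e a) - e (d a)) \<in> D"
  using assms unfolding der_subalgebra_def by blast+

lemma
  assumes "lin_on_D sA sV D \<iota>"
  shows lin_on_D_add: "d \<in> D \<Longrightarrow> e \<in> D \<Longrightarrow> \<iota> (\<lambda>a. d a + e a) = \<iota> d + \<iota> e"
    and lin_on_D_scale: "d \<in> D \<Longrightarrow> \<iota> (\<lambda>a. sA c (d a)) = sV c (\<iota> d)"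
  using assms unfolding lin_on_D_def by blast+

lemma lin_on_D_zero: "lin_on_D sA sV D \<iota> \<Longrightarrow> (\<lambda>_. 0) \<in> D \<Longrightarrow> \<iota> (\<lambda>_. 0) = 0"
  using lin_on_D_add[of sA sV D \<iota> "\<lambda>_. 0" "\<lambda>_. 0"] by simp

locale current_extension_pair = central_current_extension sL brL sA D ip \<xi> sG brG tG z \<iota>G
  for sL :: "'k::field \<Rightarrow> 'l::ab_group_add \<Rightarrow> 'l" and brL and sA :: "'k \<Rightarrow> 'a::comm_ring_1 \<Rightarrow> 'a" and D ip \<xi>
    and sG :: "'k \<Rightarrow> 'g::ab_group_add \<Rightarrow> 'g" and brG tG z \<iota>G +
  fixes sH :: "'k \<Rightarrow> 'h::ab_group_add \<Rightarrow> 'h" and brH :: "'h \<Rightarrow> 'h \<Rightarrow> 'h"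
    and tH :: "'l \<Rightarrow> 'a \<Rightarrow> 'h" and \<iota>H :: "('a \<Rightarrow> 'a) \<Rightarrow> 'h"
  assumes D: "der_subalgebra sA D"
    and G_D: "lin_on_D sA sG D \<iota>G"
    and G_sum_unique: "\<And>t c d t' c' d'. t \<in> module.span sG (range (case_prod tG)) \<Longrightarrow> d \<in> D \<Longrightarrow>
        t' \<in> module.span sG (range (case_prod tG)) \<Longrightarrow> d' \<in> D \<Longrightarrow>
        t + sG c z + \<iota>G d = t' + sG c' z + \<iota>G d' \<Longrightarrow> t = t' \<and> d = d'"
    and G_derivations_bracket: "\<And>d e. d \<in> D \<Longrightarrow> e \<in> D \<Longrightarrow> brG (\<iota>G d) (\<iota>G e) = \<iota>G (\<lambda>a. d (e a) - e (d a))"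
    and H_lie: "lie_algebra sH brH"
    and H_tensor: "tensor_embedding sL sA sH tH"
    and H_D: "lin_on_D sA sH D \<iota>H"
    and H_sum: "\<And>h. \<exists>t d. t \<in> module.span sH (range (case_prod tH)) \<and> d \<in> D \<and> h = t + \<iota>H d"
    and H_sum_unique: "\<And>t d t' d'. t \<in> module.span sH (range (case_prod tH)) \<Longrightarrow> d \<in> D \<Longrightarrow>
        t' \<in> module.span sH (range (case_prod tH)) \<Longrightarrow> d' \<in> D \<Longrightarrow> t + \<iota>H d = t' + \<iota>H d' \<Longrightarrow> t = t' \<and> d = d'"
    and H_tensor_bracket: "\<And>x y a b. brH (tH x a) (tH y b) = tH (brL x y) (a * b)"
    and H_derivation_bracket: "\<And>d x a. d \<in> D \<Longrightarrow> brH (\<iota>H d) (tH x a) = tH x (d a)"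
    and H_derivations_bracket: "\<And>d e. d \<in> D \<Longrightarrow> e \<in> D \<Longrightarrow> brH (\<iota>H d) (\<iota>H e) = \<iota>H (\<lambda>a. d (e a) - e (d a))"
begin

sublocale H: vector_space sH by (rule lie_algebra_vector_space[OF H_lie])
sublocale GH: tensor_embedding_pair sL sA sG tG sH tH by (unfold_locales; fact G_tensor H_tensor)
sublocale HG: tensor_embedding_pair sL sA sH tH sG tG by (unfold_locales; fact H_tensor G_tensor)

definition \<pi> :: "'g \<Rightarrow> 'h" where
  "\<pi> g = (THE h. \<exists>t c d. t \<in> GH.SV \<and> d \<in> D \<and> g = t + sG c z + \<iota>G d \<and> h = GH.T t + \<iota>H d)"

definition \<sigma> :: "'h \<Rightarrow> 'g" where
  "\<sigma> h = (THE g. \<exists>t d. t \<in> HG.SV \<and> d \<in> D \<and> h = t + \<iota>H d \<and> g = HG.T t + \<iota>G d)"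

lemma \<pi>_sum: "t \<in> GH.SV \<Longrightarrow> d \<in> D \<Longrightarrow> \<pi> (t + sG c z + \<iota>G d) = GH.T t + \<iota>H d"
  unfolding \<pi>_def by (rule the_equality) (use G_sum_unique in blast)+

lemma \<sigma>_sum: "t \<in> HG.SV \<Longrightarrow> d \<in> D \<Longrightarrow> \<sigma> (t + \<iota>H d) = HG.T t + \<iota>G d"
  unfolding \<sigma>_def by (rule the_equality) (use H_sum_unique in blast)+

lemmas D_zero = der_subalgebra_zero[OF D] and D_add = der_subalgebra_add[OF D]
  and D_scale = der_subalgebra_scale[OF D] and D_bracket = der_subalgebra_bracket[OF D]

lemma \<pi>_linear: "module_hom sG sH \<pi>"
proof -
  have "\<pi> (g1 + g2) = \<pi> g1 + \<pi> g2" for g1 g2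
  proof -
    obtain t1 c1 d1 where 1: "t1 \<in> GH.SV" "d1 \<in> D" "g1 = t1 + sG c1 z + \<iota>G d1" using G_sum by blast
    obtain t2 c2 d2 where 2: "t2 \<in> GH.SV" "d2 \<in> D" "g2 = t2 + sG c2 z + \<iota>G d2" using G_sum by blast
    have "g1 + g2 = (t1 + t2) + sG (c1 + c2) z + \<iota>G (\<lambda>a. d1 a + d2 a)"
      unfolding 1(3) 2(3) lin_on_D_add[OF G_D 1(2) 2(2)] by (simp add: G.scale_left_distrib algebra_simps)
    then have "\<pi> (g1 + g2) = GH.T (t1 + t2) + \<iota>H (\<lambda>a. d1 a + d2 a)"
      using \<pi>_sum[OF G.span_add[OF 1(1) 2(1)] D_add[OF 1(2) 2(2)]] by simp
    then show ?thesis
      unfolding 1(3) 2(3) \<pi>_sum[OF 1(1,2)] \<pi>_sum[OF 2(1,2)] GH.transfer_add[OF 1(1) 2(1)]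
        lin_on_D_add[OF H_D 1(2) 2(2)]
      by (simp add: algebra_simps)
  qed
  moreover have "\<pi> (sG k g) = sH k (\<pi> g)" for k g
  proof -
    obtain t c d where 1: "t \<in> GH.SV" "d \<in> D" "g = t + sG c z + \<iota>G d" using G_sum by blast
    have "sG k g = sG k t + sG (k * c) z + \<iota>G (\<lambda>a. sA k (d a))"
      unfolding 1(3) lin_on_D_scale[OF G_D 1(2)] by (simp add: G.scale_right_distrib)
    then have "\<pi> (sG k g) = GH.T (sG k t) + \<iota>H (\<lambda>a. sA k (d a))"
      using \<pi>_sum[OF G.span_scale[OF 1(1)] D_scale[OF 1(2)]] by simp
    then show ?thesis
      unfolding 1(3) \<pi>_sum[OF 1(1,2)] GH.transfer_scale[OF 1(1)] lin_on_D_scale[OF H_D 1(2)]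
      by (simp add: H.scale_right_distrib)
  qed
  ultimately show ?thesis by (simp add: module_hom_iff G.module_axioms H.module_axioms)
qed

lemma \<sigma>_linear: "module_hom sH sG \<sigma>"
proof -
  have "\<sigma> (h1 + h2) = \<sigma> h1 + \<sigma> h2" for h1 h2
  proof -
    obtain t1 d1 where 1: "t1 \<in> HG.SV" "d1 \<in> D" "h1 = t1 + \<iota>H d1" using H_sum by blast
    obtain t2 d2 where 2: "t2 \<in> HG.SV" "d2 \<in> D" "h2 = t2 + \<iota>H d2" using H_sum by blast
    have "h1 + h2 = (t1 + t2) + \<iota>H (\<lambda>a. d1 a + d2 a)"
      unfolding 1(3) 2(3) lin_on_D_add[OF H_D 1(2) 2(2)] by (simp add: algebra_simps)
    then have "\<sigma> (h1 + h2) = HG.T (t1 + t2) + \<iota>G (\<lambda>a. d1 a + d2 a)"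
      using \<sigma>_sum[OF H.span_add[OF 1(1) 2(1)] D_add[OF 1(2) 2(2)]] by simp
    then show ?thesis
      unfolding 1(3) 2(3) \<sigma>_sum[OF 1(1,2)] \<sigma>_sum[OF 2(1,2)] HG.transfer_add[OF 1(1) 2(1)]
        lin_on_D_add[OF G_D 1(2) 2(2)]
      by (simp add: algebra_simps)
  qed
  moreover have "\<sigma> (sH k h) = sG k (\<sigma> h)" for k h
  proof -
    obtain t d where 1: "t \<in> HG.SV" "d \<in> D" "h = t + \<iota>H d" using H_sum by blast
    have "sH k h = sH k t + \<iota>H (\<lambda>a. sA k (d a))"
      unfolding 1(3) lin_on_D_scale[OF H_D 1(2)] by (simp add: H.scale_right_distrib)
    then have "\<sigma> (sH k h) = HG.T (sH k t) + \<iota>G (\<lambda>a. sA k (d a))"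
      using \<sigma>_sum[OF H.span_scale[OF 1(1)] D_scale[OF 1(2)]] by simp
    then show ?thesis
      unfolding 1(3) \<sigma>_sum[OF 1(1,2)] HG.transfer_scale[OF 1(1)] lin_on_D_scale[OF G_D 1(2)]
      by (simp add: G.scale_right_distrib)
  qed
  ultimately show ?thesis by (simp add: module_hom_iff G.module_axioms H.module_axioms)
qed

lemma \<pi>_tensor: "\<pi> (tG x a) = tH x a"
proof -
  have "tG x a \<in> GH.SV" by (rule G.span_base) auto
  from \<pi>_sum[OF this D_zero, of 0] show ?thesis
    by (simp add: lin_on_D_zero[OF G_D D_zero] lin_on_D_zero[OF H_D D_zero] GH.transfer_tensor)
qed

lemma \<pi>_center: "\<pi> z = 0"
  using \<pi>_sum[OF G.span_zero D_zero, of 1]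
  by (simp add: lin_on_D_zero[OF G_D D_zero] lin_on_D_zero[OF H_D D_zero] GH.transfer_zero)

lemma \<pi>_derivation: "d \<in> D \<Longrightarrow> \<pi> (\<iota>G d) = \<iota>H d"
  using \<pi>_sum[OF G.span_zero, of d 0] by (simp add: GH.transfer_zero)

lemma \<pi>_\<sigma>: "\<pi> (\<sigma> h) = h"
proof -
  obtain t d where 1: "t \<in> HG.SV" "d \<in> D" "h = t + \<iota>H d" using H_sum by blast
  show ?thesis
    using \<pi>_sum[OF HG.transfer_in[OF 1(1)] 1(2), of 0]
    by (simp add: 1 \<sigma>_sum HG.transfer_inverse)
qed

lemma \<sigma>_\<pi>: "\<exists>c. g = \<sigma> (\<pi> g) + sG c z"
proof -
  obtain t c d where 1: "t \<in> GH.SV" "d \<in> D" "g = t + sG c z + \<iota>G d" using G_sum by blast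
  have "\<sigma> (\<pi> g) = t + \<iota>G d"
    unfolding 1(3) \<pi>_sum[OF 1(1,2)] \<sigma>_sum[OF GH.transfer_in[OF 1(1)] 1(2)] GH.transfer_inverse[OF 1(1)] ..
  then have "g = \<sigma> (\<pi> g) + sG c z" using 1(3) by (simp add: algebra_simps)
  then show ?thesis ..
qed

abbreviation "G_generators \<equiv> range (case_prod tG) \<union> insert z (\<iota>G ` D)"

lemma G_generators_span: "G.span G_generators = UNIV"
proof -
  have "g \<in> G.span G_generators" for g
  proof -
    obtain t c d where "t \<in> GH.SV" "d \<in> D" "g = t + sG c z + \<iota>G d" using G_sum by blast
    moreover have "GH.SV \<subseteq> G.span G_generators" by (rule G.span_mono) blast
    moreover have "z \<in> G.span G_generators" and "\<iota>G d \<in> G.span G_generators" if "d \<in> D" for d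
      using that by (auto intro: G.span_base)
    ultimately show ?thesis by (blast intro: G.span_add G.span_scale)
  qed
  then show ?thesis by blast
qed

lemma \<pi>_bracket_generators:
  assumes "x \<in> G_generators" and "y \<in> G_generators"
  shows "\<pi> (brG x y) = brH (\<pi> x) (\<pi> y)"
proof -
  interpret \<pi>: module_hom sG sH \<pi> by (rule \<pi>_linear)
  have bilG: "bilin_map sG sG sG brG" and bilH: "bilin_map sH sH sH brH"
    using lie_algebra_bilin[OF G_lie] lie_algebra_bilin[OF H_lie] .
  have right_center: "brG g z = 0" for g
    using lie_algebra_antisym[OF G_lie, of z g] G_central by simp
  have tensor_derivation: "brG (tG x a) (\<iota>G d) = - tG x (d a)" "brH (tH x a) (\<iota>H d) = - tH x (d a)"
    if "d \<in> D" for x a d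
    using lie_algebra_antisym[OF G_lie, of "\<iota>G d" "tG x a"] lie_algebra_antisym[OF H_lie, of "\<iota>H d" "tH x a"]
      G_derivation_bracket[OF that] H_derivation_bracket[OF that] by simp_all
  from assms show ?thesis
    by (auto simp: \<pi>.add \<pi>.scale \<pi>.neg \<pi>_tensor \<pi>_center \<pi>_derivation right_center tensor_derivation
        G_tensor_bracket H_tensor_bracket G_central G_derivation_bracket H_derivation_bracket
        G_derivations_bracket H_derivations_bracket D_bracket
        bilin_map_zero_left[OF bilH] bilin_map_zero_right[OF bilH])
qed

lemma \<pi>_bracket: "\<pi> (brG x y) = brH (\<pi> x) (\<pi> y)"
proof (rule bilin_map_eq_on_span[of sG sG sH "\<lambda>x y. \<pi> (brG x y)" "\<lambda>x y. brH (\<pi> x) (\<pi> y)"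
      G_generators G_generators])
  show "bilin_map sG sG sH (\<lambda>x y. \<pi> (brG x y))"
    by (rule bilin_map_compose_linear[OF \<pi>_linear lie_algebra_bilin[OF G_lie]])
  show "bilin_map sG sG sH (\<lambda>x y. brH (\<pi> x) (\<pi> y))"
    by (rule bilin_map_linear_compose[OF \<pi>_linear \<pi>_linear lie_algebra_bilin[OF H_lie]])
qed (simp_all only: \<pi>_bracket_generators G_generators_span UNIV_I)

theorem Z2comm_iso: "forms_iso (Z2comm sG brG) (Z2comm sH brH)"
  using \<pi>_linear \<sigma>_linear \<pi>_bracket \<pi>_\<sigma> \<sigma>_\<pi> Z2comm_center_radical
  by (rule Z2comm_iso_quotient_by_radical_element)

end

theorem lemma5p4:
  fixes sL :: "'k::field \<Rightarrow> 'l::ab_group_add \<Rightarrow> 'l" and brL :: "'l \<Rightarrow> 'l \<Rightarrow> 'l"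
    and sA :: "'k \<Rightarrow> 'a::comm_ring_1 \<Rightarrow> 'a"
    and D :: "('a \<Rightarrow> 'a) set"
    and ip :: "'l \<Rightarrow> 'l \<Rightarrow> 'k" and \<xi> :: "'a \<Rightarrow> 'a \<Rightarrow> 'k"
    and sG :: "'k \<Rightarrow> 'g::ab_group_add \<Rightarrow> 'g" and brG :: "'g \<Rightarrow> 'g \<Rightarrow> 'g"
    and tG :: "'l \<Rightarrow> 'a \<Rightarrow> 'g" and z :: 'g and \<iota>G :: "('a \<Rightarrow> 'a) \<Rightarrow> 'g"
    and sH :: "'k \<Rightarrow> 'h::ab_group_add \<Rightarrow> 'h" and brH :: "'h \<Rightarrow> 'h \<Rightarrow> 'h"
    and tH :: "'l \<Rightarrow> 'a \<Rightarrow> 'h" and \<iota>H :: "('a \<Rightarrow> 'a) \<Rightarrow> 'h"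
  assumes char2: "(2::'k) \<noteq> 0" and char3: "(3::'k) \<noteq> 0"
    and L: "lie_algebra sL brL" and perf: "perfect_lie sL brL"
    and A: "comm_algebra sA"
    and fin: "fin_dim sL \<or> fin_dim sA"
    and D: "der_subalgebra sA D"
    and ip: "bilin_form sL ip" "\<forall>x y. ip x y = ip y x" "invariant_form brL ip" "ip \<noteq> (\<lambda>x y. 0)"
    and xi: "\<xi> \<in> HC1 sA" "\<xi> \<noteq> (\<lambda>a b. 0)"
    \<comment> \<open>G = (L \<otimes> A) \<oplus> K z \<oplus> D with the given brackets, assumed to be a Lie algebra\<close>
    and G: "lie_algebra sG brG"
    and G_tensor: "tensor_embedding sL sA sG tG"
    and G_D: "lin_on_D sA sG D \<iota>G"
    and G_sum_ex: "\<forall>g. \<exists>t c d. t \<in> module.span sG (range (case_prod tG)) \<and> d \<in> D \<and>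
                        g = t + sG c z + \<iota>G d"
    and G_sum_uniq: "\<forall>t c d t' c' d'. t \<in> module.span sG (range (case_prod tG)) \<and> d \<in> D \<and>
                        t' \<in> module.span sG (range (case_prod tG)) \<and> d' \<in> D \<and>
                        t + sG c z + \<iota>G d = t' + sG c' z + \<iota>G d' \<longrightarrow> t = t' \<and> c = c' \<and> d = d'"
    and G_br1: "\<forall>x y a b. brG (tG x a) (tG y b) = tG (brL x y) (a * b) + sG (ip x y * \<xi> a b) z"
    and G_br2: "\<forall>d\<in>D. \<forall>x a. brG (\<iota>G d) (tG x a) = tG x (d a)"
    and G_br3: "\<forall>d\<in>D. \<forall>e\<in>D. brG (\<iota>G d) (\<iota>G e) = \<iota>G (\<lambda>a. d (e a) - e (d a))"
    and G_br4: "\<forall>g. brG z g = 0"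
    \<comment> \<open>H = (L \<otimes> A) \<oplus> D with the given brackets\<close>
    and H: "lie_algebra sH brH"
    and H_tensor: "tensor_embedding sL sA sH tH"
    and H_D: "lin_on_D sA sH D \<iota>H"
    and H_sum_ex: "\<forall>h. \<exists>t d. t \<in> module.span sH (range (case_prod tH)) \<and> d \<in> D \<and> h = t + \<iota>H d"
    and H_sum_uniq: "\<forall>t d t' d'. t \<in> module.span sH (range (case_prod tH)) \<and> d \<in> D \<and>
                        t' \<in> module.span sH (range (case_prod tH)) \<and> d' \<in> D \<and>
                        t + \<iota>H d = t' + \<iota>H d' \<longrightarrow> t = t' \<and> d = d'"
    and H_br1: "\<forall>x y a b. brH (tH x a) (tH y b) = tH (brL x y) (a * b)"
    and H_br2: "\<forall>d\<in>D. \<forall>x a. brH (\<iota>H d) (tH x a) = tH x (d a)"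
    and H_br3: "\<forall>d\<in>D. \<forall>e\<in>D. brH (\<iota>H d) (\<iota>H e) = \<iota>H (\<lambda>a. d (e a) - e (d a))"
  shows "forms_iso (Z2comm sG brG) (Z2comm sH brH)"
proof -
  interpret current_extension_pair sL brL sA D ip \<xi> sG brG tG z \<iota>G sH brH tH \<iota>H
    by unfold_locales
      (fact char2 char3 L perf ip(1,3,4) ip(2)[rule_format] xi G G_tensor G_sum_ex[rule_format]
        G_br1[rule_format] G_br2[rule_format] G_br4[rule_format] D G_D G_br3[rule_format] H H_tensor H_D
        H_sum_ex[rule_format] H_br1[rule_format] H_br2[rule_format] H_br3[rule_format]
      | use G_sum_uniq H_sum_uniq in blast)+
  show ?thesis by (rule Z2comm_iso)
qed

end
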